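(* Let $n\ge k\ge1$, $m\ge1$. Let $(a_j,b_j)_{j\in[m]}$ be pairs with $a_j\in\mathbb{F}_2^n\setminus\{0\}$, $b_j\in\mathbb{F}_2$, and let $\varphi_j$ be the linear form $y\mapsto\langle a_j,y\rangle$. For each $j$ independently: choose $(\gamma_{j,1},\dots,\gamma_{j,k-1})$ uniformly among $(k-1)$-tuples of linear forms such that $\gamma_{j,1},\dots,\gamma_{j,k-1},\varphi_j$ are linearly independent; choose $\beta_{j,1},\dots,\beta_{j,k-1}\in\mathbb{F}_2$ uniformly and independently; choose a uniformly random permutation and let $(\ell_{j,1},\dots,\ell_{j,k})$ be $(\gamma_{j,1},\dots,\gamma_{j,k-1},\varphi_j)$ in that order and $(\varepsilon_{j,1},\dots,\varepsilon_{j,k})$ be $(\beta_{j,1},\dots,\beta_{j,k-1},1-b_j)$ in the same order; set $V_j=\{x:\ell_{j,i}(x)=\varepsilon_{j,i}\ \forall i\in[k]\}$ and $V=(V_1,\dots,V_m)$. Then: (i) if the $a_j$ are i.i.d. uniform on $\mathbb{F}_2^n\setminus\{0\}$ and the $b_j$ are i.i.d. uniform on $\mathbb{F}_2$ independent of them, then $V\sim\mathbf{P}_{\text{unif}}$; (ii) if the $a_j$ are i.i.d. uniform on $\mathbb{F}_2^n\setminus\{0\}$ and $b_j=\langle a_j,x\rangle+e_j$ for a fixed $x\in\mathbb{F}_2^n$ and i.i.d. $e_j\sim\mathrm{Bernoulli}(\eta)$ independent of the $a_j$, with $\eta\in[0,1/2)$, then $V\sim\mathbf{P}_{x,\pi}$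 with $\pi=1-2\eta$.
   Context: A $k$-flat of $\mathbb{F}_2^n$ is an affine subspace of dimension $n-k$. $q_0$ is the uniform distribution on $k$-flats; for $x\in\mathbb{F}_2^n$, $q_x$ is the uniform distribution on $k$-flats not containing $x$, and $q_{x,\pi}:=(1-\pi)q_0+\pi q_x$. $\mathbf{P}_{\text{unif}}=q_0^{\otimes m}$ and $\mathbf{P}_{x,\pi}=q_{x,\pi}^{\otimes m}$. *)

theory Defs
  imports "HOL-Probability.Probability" "HOL-Combinatorics.Permutations"
begin

section \<open>The vector space F_2^n, modelled as bool lists of length n (True = 1)\<close>

definition vecs :: "nat \<Rightarrow> bool list set" where
  "vecs n = {v. length v = n}"

definition zerov :: "nat \<Rightarrow> bool list" where
  "zerov n = replicate n False"

definition vadd :: "bool list \<Rightarrow> bool list \<Rightarrow> bool list" where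
  "vadd u v = map2 (\<noteq>) u v"

definition ip :: "bool list \<Rightarrow> bool list \<Rightarrow> bool" where
  "ip a y = odd (card {i. i < length a \<and> a ! i \<and> y ! i})"

definition lincomb :: "nat \<Rightarrow> bool list list \<Rightarrow> bool list \<Rightarrow> bool list" where
  "lincomb n vs c = foldr (\<lambda>(ci, v) acc. if ci then vadd v acc else acc) (zip c vs) (zerov n)"

definition lin_indep :: "nat \<Rightarrow> bool list list \<Rightarrow> bool" where
  "lin_indep n vs \<longleftrightarrow> (\<forall>c. length c = length vs \<and> lincomb n vs c = zerov n \<longrightarrow> (\<forall>b\<in>set c. \<not> b))"

definition affine_dim :: "nat \<Rightarrow> nat \<Rightarrow> bool list set \<Rightarrow> bool" where
  "affine_dim n d S \<longleftrightarrow> (\<exists>v bs. v \<in> vecs n \<and> set bs \<subseteq> vecs n \<and> length bs = d \<and> lin_indep n bs \<and>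
      S = {vadd v (lincomb n bs c) | c. length c = d})"

definition kflats :: "nat \<Rightarrow> nat \<Rightarrow> bool list set set" where
  "kflats n k = {S. affine_dim n (n - k) S}"

definition q0 :: "nat \<Rightarrow> nat \<Rightarrow> bool list set pmf" where
  "q0 n k = pmf_of_set (kflats n k)"

definition qx :: "nat \<Rightarrow> nat \<Rightarrow> bool list \<Rightarrow> bool list set pmf" where
  "qx n k x = pmf_of_set {S \<in> kflats n k. x \<notin> S}"

definition qxpi :: "nat \<Rightarrow> nat \<Rightarrow> bool list \<Rightarrow> real \<Rightarrow> bool list set pmf" where
  "qxpi n k x \<pi> = bind_pmf (bernoulli_pmf \<pi>) (\<lambda>c. if c then qx n k x else q0 n k)"

fun seq_pmf :: "'a pmf list \<Rightarrow> 'a list pmf" where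
  "seq_pmf [] = return_pmf []"
| "seq_pmf (p # ps) = bind_pmf p (\<lambda>x. bind_pmf (seq_pmf ps) (\<lambda>xs. return_pmf (x # xs)))"

definition iid_pmf :: "nat \<Rightarrow> 'a pmf \<Rightarrow> 'a list pmf" where
  "iid_pmf m p = seq_pmf (replicate m p)"

definition P_unif :: "nat \<Rightarrow> nat \<Rightarrow> nat \<Rightarrow> bool list set list pmf" where
  "P_unif n k m = iid_pmf m (q0 n k)"

definition P_xpi :: "nat \<Rightarrow> nat \<Rightarrow> nat \<Rightarrow> bool list \<Rightarrow> real \<Rightarrow> bool list set list pmf" where
  "P_xpi n k m x \<pi> = iid_pmf m (qxpi n k x \<pi>)"

text \<open>Linear forms y \<mapsto> <g, y> are identified with their coefficient vectors g.\<close>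
definition flat_of :: "nat \<Rightarrow> nat \<Rightarrow> bool list \<Rightarrow> bool \<Rightarrow> bool list set pmf" where
  "flat_of n k a b =
     bind_pmf (pmf_of_set {gs. length gs = k - 1 \<and> set gs \<subseteq> vecs n \<and> lin_indep n (gs @ [a])}) (\<lambda>gs.
     bind_pmf (pmf_of_set {bs :: bool list. length bs = k - 1}) (\<lambda>bs.
     bind_pmf (pmf_of_set {\<sigma>. \<sigma> permutes {..<k}}) (\<lambda>\<sigma>.
       let l = (\<lambda>i. (gs @ [a]) ! \<sigma> i); e = (\<lambda>i. (bs @ [\<not> b]) ! \<sigma> i)
       in return_pmf {y \<in> vecs n. \<forall>i<k. ip (l i) y = e i})))"

definition nonzero_vecs :: "nat \<Rightarrow> bool list set" where
  "nonzero_vecs n = vecs n - {zerov n}"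

definition V_unif :: "nat \<Rightarrow> nat \<Rightarrow> nat \<Rightarrow> bool list set list pmf" where
  "V_unif n k m =
     bind_pmf (iid_pmf m (pmf_of_set (nonzero_vecs n))) (\<lambda>as.
     bind_pmf (iid_pmf m (pmf_of_set (UNIV :: bool set))) (\<lambda>bs.
       seq_pmf (map2 (flat_of n k) as bs)))"

definition V_lpn :: "nat \<Rightarrow> nat \<Rightarrow> nat \<Rightarrow> bool list \<Rightarrow> real \<Rightarrow> bool list set list pmf" where
  "V_lpn n k m x \<eta> =
     bind_pmf (iid_pmf m (pmf_of_set (nonzero_vecs n))) (\<lambda>as.
     bind_pmf (iid_pmf m (bernoulli_pmf \<eta>)) (\<lambda>es.
       seq_pmf (map2 (flat_of n k) as (map2 (\<lambda>a e. ip a x \<noteq> e) as es))))"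

end

theory Submission
  imports Defs
begin

text \<open>A \<open>k\<close>-flat is the solution set of \<open>k\<close> independent equations \<open>\<langle>l\<^sub>i, y\<rangle> = \<epsilon>\<^sub>i\<close>, and
  such a system describes a given flat \<open>F\<close> exactly when its forms span the \<open>k\<close>-dimensional
  space \<open>\<Lambda>\<^sub>F\<close> of forms that are constant on \<open>F\<close> and its right-hand sides are the values of
  these forms on \<open>F\<close>. Hence a pair \<open>(a, b)\<close> produces \<open>F\<close> for a number of choices of
  \<open>(\<gamma>, \<beta>)\<close> that is the same for every \<open>F\<close> when \<open>a \<in> \<Lambda>\<^sub>F - {0}\<close> and
  \<open>1 - b = \<langle>a, F\<rangle>\<close>, and zero otherwise. Summing over \<open>a \<noteq> 0\<close> and both values of \<open>b\<close> gives
  the same weight to every \<open>k\<close>-flat. For \<open>b = \<langle>a, x\<rangle>\<close> the condition becomes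
  \<open>\<langle>a, x\<rangle> \<noteq> \<langle>a, F\<rangle>\<close>, which holds for no \<open>a \<in> \<Lambda>\<^sub>F\<close> if \<open>x \<in> F\<close> and for exactly half of
  \<open>\<Lambda>\<^sub>F\<close> otherwise, so the flat is uniform among those avoiding \<open>x\<close>. Finally
  \<open>Bernoulli(\<eta>)\<close> noise is no noise with probability \<open>1 - 2\<eta>\<close> and a fair coin otherwise,
  which yields the mixture \<open>q\<^sub>x\<^sub>,\<^sub>\<pi>\<close>, and independence across the \<open>m\<close> samples
  makes all laws products.\<close>

lemma card_involution_swap:
  assumes "finite A"
    and "\<And>x. x \<in> A \<Longrightarrow> f x \<in> A" "\<And>x. x \<in> A \<Longrightarrow> f (f x) = x"
    and "\<And>x. x \<in> A \<Longrightarrow> P (f x) \<longleftrightarrow> \<not> P x"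
  shows "card A = 2 * card {x \<in> A. P x}"
proof -
  have "{x \<in> A. \<not> P x} = f ` {x \<in> A. P x}"
  proof (intro equalityI subsetI)
    fix x
    assume "x \<in> {x \<in> A. \<not> P x}"
    then show "x \<in> f ` {x \<in> A. P x}"
      using assms(2-4) by (intro image_eqI[of x f "f x"]) auto
  qed (use assms(2,4) in auto)
  moreover have "inj_on f {x \<in> A. P x}"
    using assms(3) by (metis (mono_tags, lifting) inj_onI mem_Collect_eq)
  ultimately have "card {x \<in> A. \<not> P x} = card {x \<in> A. P x}"
    by (simp add: card_image)
  moreover have "card A = card {x \<in> A. P x} + card {x \<in> A. \<not> P x}"
    using assms(1) by (subst card_Un_disjoint[symmetric]) (auto intro!: arg_cong[of _ _ card])
  ultimately show ?thesis
    by simp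
qed

lemma vecs_iff [simp]: "v \<in> vecs n \<longleftrightarrow> length v = n"
  by (simp add: vecs_def)

lemma finite_vecs [simp]: "finite (vecs n)"
  using finite_lists_length_eq[of "UNIV :: bool set" n] by (simp add: vecs_def)

lemma card_vecs: "card (vecs n) = 2 ^ n"
  using card_lists_length_eq[of "UNIV :: bool set" n] by (simp add: vecs_def)

lemma length_vadd [simp]: "length (vadd u v) = min (length u) (length v)"
  by (simp add: vadd_def)

lemma length_zerov [simp]: "length (zerov n) = n"
  by (simp add: zerov_def)

lemma nth_vadd [simp]: "i < length u \<Longrightarrow> i < length v \<Longrightarrow> vadd u v ! i = (u ! i \<noteq> v ! i)"
  by (simp add: vadd_def)

lemma nth_zerov [simp]: "i < n \<Longrightarrow> zerov n ! i = False"
  by (simp add: zerov_def)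

lemma vadd_commute: "vadd u v = vadd v u"
  unfolding vadd_def by (rule nth_equalityI) auto

lemma vadd_zerov_right [simp]: "length v = n \<Longrightarrow> vadd v (zerov n) = v"
  by (rule nth_equalityI) auto

lemma vadd_self [simp]: "vadd v v = zerov (length v)"
  by (rule nth_equalityI) auto

lemma vadd_vadd_cancel: "length u = length w \<Longrightarrow> vadd u (vadd u w) = w"
  by (rule nth_equalityI) auto

lemma vadd_left_inj: "length x = length u \<Longrightarrow> length y = length u \<Longrightarrow> vadd u x = vadd u y \<longleftrightarrow> x = y"
  by (metis vadd_vadd_cancel)

lemma vadd_eq_zerov_imp_eq: "vadd v y = zerov n \<Longrightarrow> length v = n \<Longrightarrow> length y = n \<Longrightarrow> v = y"
  by (metis vadd_commute vadd_vadd_cancel vadd_zerov_right)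

text \<open>A recursive form of \<open>ip\<close>, from which bilinearity follows by list induction.\<close>

fun ip_rec :: "bool list \<Rightarrow> bool list \<Rightarrow> bool" where
  "ip_rec (a # as) (y # ys) = ((a \<and> y) \<noteq> ip_rec as ys)"
| "ip_rec _ _ = False"

lemma ip_eq_ip_rec: "length a = length y \<Longrightarrow> ip a y = ip_rec a y"
proof (induction a arbitrary: y)
  case Nil
  then show ?case by (simp add: ip_def)
next
  case (Cons a as)
  then obtain z zs where y: "y = z # zs" and len: "length as = length zs"
    by (cases y) auto
  have "{i. i < length (a # as) \<and> (a # as) ! i \<and> y ! i} =
      (if a \<and> z then {0} else {}) \<union> Suc ` {i. i < length as \<and> as ! i \<and> zs ! i}"
    (is "?lhs = ?rhs")
  proof (rule set_eqI)
    fix i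
    show "i \<in> ?lhs \<longleftrightarrow> i \<in> ?rhs"
      unfolding y by (cases i) auto
  qed
  then have "card {i. i < length (a # as) \<and> (a # as) ! i \<and> y ! i} =
      (if a \<and> z then 1 else 0) + card {i. i < length as \<and> as ! i \<and> zs ! i}"
    by (simp add: card_Un_disjoint card_image)
  then show ?case
    using Cons.IH[OF len] unfolding ip_def y by auto
qed

lemma ip_rec_vadd_left:
  "length a = length a' \<Longrightarrow> length a' = length y \<Longrightarrow> ip_rec (vadd a a') y = (ip_rec a y \<noteq> ip_rec a' y)"
  by (induction a a' y rule: list_induct3) (auto simp: vadd_def)

lemma ip_rec_commute: "length a = length y \<Longrightarrow> ip_rec a y = ip_rec y a"
  by (induction a y rule: list_induct2) auto

lemma ip_vadd_left:
  "length a = n \<Longrightarrow> length a' = n \<Longrightarrow> length y = n \<Longrightarrow> ip (vadd a a') y = (ip a y \<noteq> ip a' y)"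
  by (simp add: ip_eq_ip_rec ip_rec_vadd_left)

lemma ip_commute: "length a = length y \<Longrightarrow> ip a y = ip y a"
  by (simp add: ip_eq_ip_rec ip_rec_commute)

lemma ip_vadd_right:
  "length a = n \<Longrightarrow> length y = n \<Longrightarrow> length y' = n \<Longrightarrow> ip a (vadd y y') = (ip a y \<noteq> ip a y')"
  by (metis ip_commute ip_vadd_left length_vadd min.idem)

lemma ip_zerov_left [simp]: "ip (zerov n) y = False"
proof -
  have "{i. i < length (zerov n) \<and> zerov n ! i \<and> y ! i} = {}"
    by auto
  then show ?thesis
    by (simp only: ip_def) simp
qed

lemma ip_zerov_right [simp]: "length a = n \<Longrightarrow> ip a (zerov n) = False"
  by (metis ip_commute ip_zerov_left length_zerov)

lemma exists_ip_True:
  assumes "length l = n" "l \<noteq> zerov n"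
  shows "\<exists>z\<in>vecs n. ip l z"
proof -
  have "\<exists>i<n. l ! i"
  proof (rule ccontr)
    assume "\<not> (\<exists>i<n. l ! i)"
    then have "l = zerov n"
      using assms(1) by (intro nth_equalityI) auto
    with assms(2) show False ..
  qed
  then obtain i where i: "i < n" "l ! i"
    by blast
  let ?z = "(zerov n)[i := True]"
  have "{j. j < length l \<and> l ! j \<and> ?z ! j} = {i}"
    using i assms by (auto simp: nth_list_update)
  then have "ip l ?z"
    by (simp add: ip_def)
  then show ?thesis
    by (intro bexI[of _ ?z]) auto
qed

section \<open>Spans and linear independence\<close>

lemma lincomb_Nil [simp]: "lincomb n [] c = zerov n"
  by (simp add: lincomb_def)

lemma lincomb_Cons [simp]:
  "lincomb n (v # vs) (c # cs) = (if c then vadd v (lincomb n vs cs) else lincomb n vs cs)"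
  by (simp add: lincomb_def)

lemma length_lincomb: "set vs \<subseteq> vecs n \<Longrightarrow> length (lincomb n vs c) = n"
proof (induction vs arbitrary: c)
  case (Cons v vs)
  then show ?case by (cases c) (auto simp: lincomb_def)
qed simp

definition lspan :: "nat \<Rightarrow> bool list list \<Rightarrow> bool list set" where
  "lspan n vs = {lincomb n vs c | c. length c = length vs}"

lemma lspan_Nil [simp]: "lspan n [] = {zerov n}"
  by (auto simp: lspan_def)

lemma lspan_Cons: "lspan n (v # vs) = lspan n vs \<union> vadd v ` lspan n vs"
proof (intro equalityI subsetI)
  fix x
  assume "x \<in> lspan n (v # vs)"
  then obtain c0 cs where "x = lincomb n (v # vs) (c0 # cs)" "length cs = length vs"
    unfolding lspan_def by (auto simp: length_Suc_conv)
  then show "x \<in> lspan n vs \<union> vadd v ` lspan n vs"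
    unfolding lspan_def by (cases c0) auto
next
  fix x
  assume "x \<in> lspan n vs \<union> vadd v ` lspan n vs"
  then obtain c0 cs where "x = (if c0 then vadd v (lincomb n vs cs) else lincomb n vs cs)"
    and "length cs = length vs"
    unfolding lspan_def by (smt (verit) UnE image_iff mem_Collect_eq)
  then show "x \<in> lspan n (v # vs)"
    unfolding lspan_def by (intro CollectI exI[of _ "c0 # cs"]) simp
qed

lemma lspan_subset_vecs: "set vs \<subseteq> vecs n \<Longrightarrow> lspan n vs \<subseteq> vecs n"
  by (auto simp: lspan_def length_lincomb)

lemma zerov_in_lspan: "zerov n \<in> lspan n vs"
  by (induction vs) (auto simp: lspan_Cons)

lemma vadd_in_lspan:
  assumes "set vs \<subseteq> vecs n" "x \<in> lspan n vs" "y \<in> lspan n vs"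
  shows "vadd x y \<in> lspan n vs"
  using assms
proof (induction vs arbitrary: x y)
  case Nil
  then show ?case by simp
next
  case (Cons v vs)
  have len: "length v = n" "lspan n vs \<subseteq> vecs n"
    using Cons.prems(1) lspan_subset_vecs by auto
  have closed: "vadd x' y' \<in> lspan n vs" if "x' \<in> lspan n vs" "y' \<in> lspan n vs" for x' y'
    using Cons.IH[OF _ that] Cons.prems(1) by simp
  have swap: "vadd (vadd v x') y' = vadd v (vadd x' y')" "vadd x' (vadd v y') = vadd v (vadd x' y')"
    "vadd (vadd v x') (vadd v y') = vadd x' y'" if "x' \<in> lspan n vs" "y' \<in> lspan n vs" for x' y'
    using that len by (auto intro!: nth_equalityI)
  obtain x' y' where "x' \<in> lspan n vs" "x = x' \<or> x = vadd v x'" "y' \<in> lspan n vs" "y = y' \<or> y = vadd v y'"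
    using Cons.prems(2,3) unfolding lspan_Cons by blast
  then show ?case
    using closed swap unfolding lspan_Cons by (elim disjE) auto
qed

lemma in_lspan: "v \<in> set vs \<Longrightarrow> set vs \<subseteq> vecs n \<Longrightarrow> v \<in> lspan n vs"
proof (induction vs)
  case (Cons w vs)
  then show ?case
    using zerov_in_lspan[of n vs] by (auto simp: lspan_Cons intro!: image_eqI[of _ _ "zerov n"])
qed simp

lemma lspan_subset:
  assumes "zerov n \<in> W" "\<And>x y. x \<in> W \<Longrightarrow> y \<in> W \<Longrightarrow> vadd x y \<in> W" "set vs \<subseteq> W"
  shows "lspan n vs \<subseteq> W"
  using assms(3) by (induction vs) (auto simp: lspan_Cons assms(1,2))

lemma lspan_subset_lspan: "set vs \<subseteq> vecs n \<Longrightarrow> set ws \<subseteq> lspan n vs \<Longrightarrow> lspan n ws \<subseteq> lspan n vs"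
  by (rule lspan_subset) (auto intro: zerov_in_lspan vadd_in_lspan)

lemma ip_lspan_False:
  assumes "set bs \<subseteq> vecs n" "length y = n" "\<forall>b\<in>set bs. \<not> ip b y" "l \<in> lspan n bs"
  shows "\<not> ip l y"
proof -
  have "lspan n bs \<subseteq> {l \<in> vecs n. \<not> ip l y}"
    using assms(1-3) by (intro lspan_subset) (auto simp: ip_vadd_left)
  with assms(4) show ?thesis
    by blast
qed

lemma lin_indep_Nil [simp]: "lin_indep n []"
  by (simp add: lin_indep_def)

lemma lin_indep_Cons:
  assumes "set (v # vs) \<subseteq> vecs n"
  shows "lin_indep n (v # vs) \<longleftrightarrow> lin_indep n vs \<and> v \<notin> lspan n vs"
proof
  assume indep: "lin_indep n (v # vs)"
  have "lin_indep n vs"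
    unfolding lin_indep_def
  proof (intro allI impI)
    fix c
    assume c: "length c = length vs \<and> lincomb n vs c = zerov n"
    then have "lincomb n (v # vs) (False # c) = zerov n" "length (False # c) = length (v # vs)"
      by simp_all
    then have "\<forall>b\<in>set (False # c). \<not> b"
      using indep unfolding lin_indep_def by blast
    then show "\<forall>b\<in>set c. \<not> b"
      by simp
  qed
  moreover have "v \<notin> lspan n vs"
  proof
    assume "v \<in> lspan n vs"
    then obtain c where c: "length c = length vs" "lincomb n vs c = v"
      by (auto simp: lspan_def)
    have "length v = n"
      using assms by simp
    then have "lincomb n (v # vs) (True # c) = zerov n" "length (True # c) = length (v # vs)"
      using c by simp_all
    then have "\<forall>b\<in>set (True # c). \<not> b"
      using indep unfolding lin_indep_def by blast
    then show False
      by simp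
  qed
  ultimately show "lin_indep n vs \<and> v \<notin> lspan n vs" ..
next
  assume indep: "lin_indep n vs \<and> v \<notin> lspan n vs"
  show "lin_indep n (v # vs)"
    unfolding lin_indep_def
  proof (intro allI impI)
    fix c
    assume c: "length c = length (v # vs) \<and> lincomb n (v # vs) c = zerov n"
    then obtain c0 cs where c0: "c = c0 # cs" "length cs = length vs"
      by (cases c) auto
    have "\<not> c0"
    proof
      assume c0
      then have "vadd v (lincomb n vs cs) = zerov n"
        using c c0 by simp
      then have "v = lincomb n vs cs"
        by (rule vadd_eq_zerov_imp_eq) (use assms in \<open>auto simp: length_lincomb\<close>)
      then show False
        using indep c0 unfolding lspan_def by blast
    qed
    moreover have "lincomb n vs cs = zerov n"
      using c c0 \<open>\<not> c0\<close> by simp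
    then have "\<forall>b\<in>set cs. \<not> b"
      using indep c0 unfolding lin_indep_def by blast
    ultimately show "\<forall>b\<in>set c. \<not> b"
      using c0 by simp
  qed
qed

lemma card_lspan:
  assumes "set vs \<subseteq> vecs n" "lin_indep n vs"
  shows "card (lspan n vs) = 2 ^ length vs"
  using assms
proof (induction vs)
  case (Cons v vs)
  have indep: "lin_indep n vs" "v \<notin> lspan n vs"
    using Cons.prems lin_indep_Cons by auto
  have span: "lspan n vs \<subseteq> vecs n" and v: "length v = n"
    using Cons.prems lspan_subset_vecs by auto
  have fin: "finite (lspan n vs)"
    using finite_subset[OF span] by simp
  have inj: "inj_on (vadd v) (lspan n vs)"
    using span v by (auto intro!: inj_onI simp: vadd_left_inj subset_iff)
  have "lspan n vs \<inter> vadd v ` lspan n vs = {}"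
  proof (rule ccontr)
    assume "lspan n vs \<inter> vadd v ` lspan n vs \<noteq> {}"
    then obtain y where y: "y \<in> lspan n vs" "vadd v y \<in> lspan n vs"
      by auto
    have "vadd (vadd v y) y \<in> lspan n vs"
      using Cons.prems(1) y by (intro vadd_in_lspan[of vs n "vadd v y" y]) auto
    moreover have "vadd (vadd v y) y = v"
      using y span v vadd_vadd_cancel[of y v] vadd_commute[of "vadd v y" y] vadd_commute[of v y]
      by auto
    ultimately show False
      using indep by simp
  qed
  then have "card (lspan n (v # vs)) = card (lspan n vs) + card (vadd v ` lspan n vs)"
    unfolding lspan_Cons using fin by (intro card_Un_disjoint) auto
  then show ?case
    using Cons.IH indep Cons.prems by (simp add: card_image[OF inj])
qed simp

lemma lin_indep_length_le:
  assumes "set vs \<subseteq> vecs n" "lin_indep n vs"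
  shows "length vs \<le> n"
proof -
  have "card (lspan n vs) \<le> card (vecs n)"
    using lspan_subset_vecs[OF assms(1)] by (intro card_mono) auto
  then show ?thesis
    using card_lspan[OF assms] card_vecs by simp
qed

lemma exists_indep_spanning:
  assumes "D \<subseteq> vecs n"
  shows "\<exists>bs. set bs \<subseteq> D \<and> lin_indep n bs \<and> D \<subseteq> lspan n bs"
proof (rule ccontr)
  assume none: "\<not> ?thesis"
  have "\<exists>bs. set bs \<subseteq> D \<and> lin_indep n bs \<and> length bs = j" for j
  proof (induction j)
    case (Suc j)
    then obtain bs where bs: "set bs \<subseteq> D" "lin_indep n bs" "length bs = j"
      by blast
    then obtain d where d: "d \<in> D" "d \<notin> lspan n bs"
      using none by blast
    have "set (d # bs) \<subseteq> vecs n"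
      using bs(1) d(1) assms by auto
    then show ?case
      using bs d lin_indep_Cons[of d bs n] by (intro exI[of _ "d # bs"]) auto
  qed (intro exI[of _ "[]"], simp)
  then obtain bs where "set bs \<subseteq> D" "lin_indep n bs" "length bs = Suc n"
    by blast
  then show False
    using lin_indep_length_le[of bs n] assms by auto
qed

lemma exists_separating_vector:
  assumes "set L \<subseteq> vecs n" "length l = n" "l \<notin> lspan n L"
  shows "\<exists>z\<in>vecs n. (\<forall>m\<in>set L. \<not> ip m z) \<and> ip l z"
  using assms
proof (induction L arbitrary: l)
  case Nil
  then show ?case
    using exists_ip_True[of l n] by auto
next
  case (Cons m L)
  have L: "set L \<subseteq> vecs n" and m: "length m = n"
    using Cons.prems by auto
  have "l \<notin> lspan n L"
    using Cons.prems(3) by (simp add: lspan_Cons)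
  then obtain z1 where z1: "z1 \<in> vecs n" "\<forall>m'\<in>set L. \<not> ip m' z1" "ip l z1"
    using Cons.IH[OF L Cons.prems(2)] by blast
  have "vadd m (vadd m l) = l"
    using m Cons.prems(2) by (simp add: vadd_vadd_cancel)
  then have "vadd m l \<notin> lspan n L"
    using Cons.prems(3) unfolding lspan_Cons by (metis UnI2 image_eqI)
  then obtain z2 where z2: "z2 \<in> vecs n" "\<forall>m'\<in>set L. \<not> ip m' z2" "ip (vadd m l) z2"
    using Cons.IH[OF L, of "vadd m l"] m Cons.prems(2) by auto
  have z2': "ip m z2 \<noteq> ip l z2"
    using z2 ip_vadd_left[OF m Cons.prems(2)] by simp
  have z12: "\<forall>m'\<in>set L. \<not> ip m' (vadd z1 z2)"
    using z1 z2 L by (auto simp: ip_vadd_right subset_iff)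
  txt \<open>Whichever of \<open>z1\<close>, \<open>z2\<close>, \<open>z1 + z2\<close> is orthogonal to \<open>m\<close> separates \<open>l\<close>.\<close>
  consider "\<not> ip m z1" | "\<not> ip m z2" | "ip m z1" "ip m z2"
    by blast
  then show ?case
  proof cases
    case 3
    then have "\<not> ip m (vadd z1 z2)" "ip l (vadd z1 z2)"
      using z1 z2 z2' m Cons.prems(2) by (auto simp: ip_vadd_right)
    then show ?thesis
      using z1 z2 z12 by (intro bexI[of _ "vadd z1 z2"]) auto
  qed (use z1 z2 z2' in auto)
qed

section \<open>Flats as solution sets of linear systems\<close>

definition solutions :: "nat \<Rightarrow> bool list list \<Rightarrow> bool list \<Rightarrow> bool list set" where
  "solutions n L e = {y \<in> vecs n. \<forall>i<length L. ip (L ! i) y = e ! i}"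

lemma solutions_Nil [simp]: "solutions n [] e = vecs n"
  by (auto simp: solutions_def)

lemma solutions_Cons: "solutions n (l # L) (c # e) = {y \<in> solutions n L e. ip l y = c}"
  unfolding solutions_def by (auto simp: less_Suc_eq_0_disj)

lemma solutions_subset_vecs: "solutions n L e \<subseteq> vecs n"
  by (auto simp: solutions_def)

lemma length_if_mem_solutions: "y \<in> solutions n L e \<Longrightarrow> length y = n"
  by (simp add: solutions_def)

lemma finite_solutions [simp]: "finite (solutions n L e)"
  using finite_subset[OF solutions_subset_vecs] by simp

lemma vadd_mem_solutions:
  assumes "y \<in> solutions n L e" "set L \<subseteq> vecs n" "length z = n" "\<forall>m\<in>set L. \<not> ip m z"
  shows "vadd z y \<in> solutions n L e"
  using assms by (auto simp: solutions_def ip_vadd_right subset_iff)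

lemma mem_homogeneous_solutions_iff:
  "y \<in> solutions n L (replicate (length L) False) \<longleftrightarrow> length y = n \<and> (\<forall>l\<in>set L. \<not> ip l y)"
  by (auto simp: solutions_def all_set_conv_all_nth)

lemma vadd_mem_solutions_iff:
  assumes "set L \<subseteq> vecs n" "v \<in> solutions n L e" "length y = n"
  shows "vadd v y \<in> solutions n L (replicate (length L) False) \<longleftrightarrow> y \<in> solutions n L e"
  using assms by (auto simp: solutions_def ip_vadd_right subset_iff)

lemma solutions_eq_vadd_image:
  assumes "set L \<subseteq> vecs n" "v \<in> solutions n L e"
  shows "solutions n L e = vadd v ` solutions n L (replicate (length L) False)"
proof (intro equalityI subsetI)
  have v: "length v = n"
    using assms(2) by (rule length_if_mem_solutions)
  fix y
  assume y: "y \<in> solutions n L e"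
  then have "length y = n"
    by (rule length_if_mem_solutions)
  then show "y \<in> vadd v ` solutions n L (replicate (length L) False)"
    using vadd_mem_solutions_iff[OF assms] y v
    by (intro image_eqI[of y "vadd v" "vadd v y"]) (simp_all add: vadd_vadd_cancel)
next
  have v: "length v = n"
    using assms(2) by (rule length_if_mem_solutions)
  fix y
  assume "y \<in> vadd v ` solutions n L (replicate (length L) False)"
  then obtain d where d: "d \<in> solutions n L (replicate (length L) False)" "y = vadd v d"
    by blast
  then have "length d = n"
    by (blast intro: length_if_mem_solutions)
  then show "y \<in> solutions n L e"
    using vadd_mem_solutions_iff[OF assms, of y] d v by (simp add: vadd_vadd_cancel)
qed

lemma card_solutions:
  assumes "set L \<subseteq> vecs n" "lin_indep n L" "length e = length L"
  shows "card (solutions n L e) = 2 ^ (n - length L)"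
  using assms
proof (induction L arbitrary: e)
  case Nil
  then show ?case by (simp add: card_vecs)
next
  case (Cons l L)
  obtain c e' where e: "e = c # e'" "length e' = length L"
    using Cons.prems(3) by (cases e) auto
  have L: "set L \<subseteq> vecs n" and l: "length l = n"
    using Cons.prems by auto
  have indep: "lin_indep n L" "l \<notin> lspan n L"
    using lin_indep_Cons[OF Cons.prems(1)] Cons.prems(2) by auto
  have "length (l # L) \<le> n"
    using lin_indep_length_le[OF Cons.prems(1,2)] .
  obtain z where z: "z \<in> vecs n" "\<forall>m\<in>set L. \<not> ip m z" "ip l z"
    using exists_separating_vector[OF L l indep(2)] by blast
  txt \<open>Translation by \<open>z\<close> preserves the first \<open>|L|\<close> equations and flips the new one.\<close>
  have "card (solutions n L e') = 2 * card {y \<in> solutions n L e'. ip l y = c}"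
  proof (rule card_involution_swap)
    fix y
    assume y: "y \<in> solutions n L e'"
    then have "length y = n"
      by (rule length_if_mem_solutions)
    then show "vadd z y \<in> solutions n L e'" "vadd z (vadd z y) = y"
      "(ip l (vadd z y) = c) \<longleftrightarrow> \<not> ip l y = c"
      using vadd_mem_solutions[OF y L] z l by (auto simp: vadd_vadd_cancel ip_vadd_right)
  qed simp
  moreover have "card (solutions n L e') = 2 ^ (n - length L)"
    using Cons.IH[OF L indep(1) e(2)] .
  moreover have "(2::nat) ^ (n - length L) = 2 * 2 ^ (n - length (l # L))"
    using \<open>length (l # L) \<le> n\<close> by (simp flip: power_Suc add: Suc_diff_Suc)
  ultimately show ?case
    using e by (simp add: solutions_Cons)
qed

lemma solutions_in_kflats:
  assumes L: "set L \<subseteq> vecs n" "lin_indep n L" "length L = k" and e: "length e = k"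
  shows "solutions n L e \<in> kflats n k"
proof -
  let ?D = "solutions n L (replicate k False)"
  have "card (solutions n L e) \<noteq> 0"
    using card_solutions[OF L(1,2)] L(3) e by simp
  then obtain v where v: "v \<in> solutions n L e"
    by fastforce
  obtain bs where bs: "set bs \<subseteq> ?D" "lin_indep n bs" "?D \<subseteq> lspan n bs"
    using exists_indep_spanning[OF solutions_subset_vecs] by blast
  have bs_vecs: "set bs \<subseteq> vecs n"
    using bs(1) solutions_subset_vecs by blast
  have "zerov n \<in> ?D"
    using L by (auto simp: solutions_def subset_iff)
  moreover have "vadd x y \<in> ?D" if "x \<in> ?D" "y \<in> ?D" for x y
    using vadd_mem_solutions_iff[OF L(1) that(1)] that(2) L(3)
    by (simp add: length_if_mem_solutions)
  ultimately have D: "?D = lspan n bs"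
    using lspan_subset[of n ?D bs] bs by blast
  have "(2::nat) ^ length bs = 2 ^ (n - k)"
    using card_lspan[OF bs_vecs bs(2)] card_solutions[OF L(1,2), of "replicate k False"] D L(3)
    by simp
  then have "length bs = n - k"
    by simp
  moreover have "solutions n L e = {vadd v (lincomb n bs c) | c. length c = n - k}"
    using solutions_eq_vadd_image[OF L(1) v] D L(3) calculation unfolding lspan_def by auto
  ultimately show ?thesis
    unfolding kflats_def affine_dim_def using length_if_mem_solutions[OF v] bs_vecs bs(2)
    by (intro CollectI exI[of _ v] exI[of _ bs]) auto
qed

lemma in_lspan_if_orthogonal:
  assumes bs: "set bs \<subseteq> vecs n"
    and L: "set L \<subseteq> vecs n" "{l \<in> vecs n. \<forall>b\<in>set bs. \<not> ip l b} \<subseteq> lspan n L"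
    and d: "length d = n" "\<forall>l\<in>set L. \<not> ip l d"
  shows "d \<in> lspan n bs"
proof (rule ccontr)
  assume "d \<notin> lspan n bs"
  then obtain z where z: "z \<in> vecs n" "\<forall>b\<in>set bs. \<not> ip b z" "ip d z"
    using exists_separating_vector[OF bs d(1)] by blast
  have "\<forall>b\<in>set bs. \<not> ip z b"
    using z bs by (auto simp: ip_commute subset_iff)
  then have "z \<in> lspan n L"
    using L(2) z(1) by blast
  then have "\<not> ip z d"
    using ip_lspan_False[OF L(1) d] by blast
  then show False
    using z d(1) by (simp add: ip_commute)
qed

lemma kflat_eq_solutions:
  assumes F: "F \<in> kflats n k" and "k \<le> n"
  shows "\<exists>L e. set L \<subseteq> vecs n \<and> lin_indep n L \<and> length L = k \<and> length e = k \<and> F = solutions n L e"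
proof -
  obtain v bs where v: "length v = n" and bs: "set bs \<subseteq> vecs n" "length bs = n - k" "lin_indep n bs"
    and "F = {vadd v (lincomb n bs c) | c. length c = n - k}"
    using F unfolding kflats_def affine_dim_def by auto
  then have F_eq: "F = vadd v ` lspan n bs"
    unfolding lspan_def bs(2) by blast
  define A where "A = {l \<in> vecs n. \<forall>b\<in>set bs. \<not> ip l b}"
  obtain L where L: "set L \<subseteq> A" "lin_indep n L" "A \<subseteq> lspan n L"
    using exists_indep_spanning[of A n] unfolding A_def by blast
  have L_vecs: "set L \<subseteq> vecs n"
    using L(1) unfolding A_def by blast
  define e where "e = map (\<lambda>l. ip l v) L"
  have "length (L ! i) = n" if "i < length L" for i
    using nth_mem[OF that] L_vecs by auto
  then have mem_iff: "y \<in> solutions n L e \<longleftrightarrow> length y = n \<and> (\<forall>l\<in>set L. \<not> ip l (vadd v y))" for y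
    using v by (auto simp: solutions_def e_def ip_vadd_right all_set_conv_all_nth)
  have "F = solutions n L e"
  proof (intro equalityI subsetI)
    fix y
    assume "y \<in> F"
    then obtain s where s: "s \<in> lspan n bs" "y = vadd v s"
      unfolding F_eq by blast
    have s_len: "length s = n"
      using s(1) lspan_subset_vecs[OF bs(1)] by auto
    have "\<not> ip l s" if "l \<in> set L" for l
    proof -
      have l: "length l = n" "\<forall>b\<in>set bs. \<not> ip l b"
        using that L(1) unfolding A_def by auto
      then have "\<forall>b\<in>set bs. \<not> ip b l"
        using bs(1) ip_commute[of _ l] by auto
      then have "\<not> ip s l"
        using ip_lspan_False[OF bs(1) l(1)] s(1) by blast
      then show ?thesis
        using ip_commute[of s l] s_len l(1) by simp
    qed
    moreover have "vadd v y = s" "length y = n"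
      using s v s_len by (simp_all add: vadd_vadd_cancel)
    ultimately show "y \<in> solutions n L e"
      using mem_iff by simp
  next
    fix y
    assume "y \<in> solutions n L e"
    then have y: "length y = n" "\<forall>l\<in>set L. \<not> ip l (vadd v y)"
      using mem_iff by blast+
    then have "vadd v y \<in> lspan n bs"
      using in_lspan_if_orthogonal[OF bs(1) L_vecs L(3)[unfolded A_def]] v by simp
    moreover have "y = vadd v (vadd v y)"
      using y v by (simp add: vadd_vadd_cancel)
    ultimately show "y \<in> F"
      unfolding F_eq by blast
  qed
  moreover have "length L = k"
  proof -
    have "inj_on (vadd v) (lspan n bs)"
      using lspan_subset_vecs[OF bs(1)] v by (auto intro!: inj_onI simp: vadd_left_inj subset_iff)
    then have "card F = 2 ^ (n - k)"
      unfolding F_eq using card_lspan[OF bs(1,3)] bs(2) by (simp add: card_image)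
    then have "(2::nat) ^ (n - k) = 2 ^ (n - length L)"
      using calculation card_solutions[OF L_vecs L(2)] by (simp add: e_def)
    then show ?thesis
      using lin_indep_length_le[OF L_vecs L(2)] \<open>k \<le> n\<close> by simp
  qed
  ultimately show ?thesis
    using L_vecs L(2) by (intro exI[of _ L] exI[of _ e]) (simp add: e_def)
qed

lemma finite_kflats: "k \<le> n \<Longrightarrow> finite (kflats n k)"
proof -
  assume "k \<le> n"
  then have "kflats n k \<subseteq> Pow (vecs n)"
    using kflat_eq_solutions solutions_subset_vecs by blast
  then show ?thesis
    by (rule finite_subset) simp
qed

locale pointed_flat =
  fixes n k :: nat and L0 :: "bool list list" and e0 y0 :: "bool list"
  assumes L0_vecs: "set L0 \<subseteq> vecs n" and L0_indep: "lin_indep n L0" and length_L0: "length L0 = k"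
    and length_e0: "length e0 = k" and y0_mem: "y0 \<in> solutions n L0 e0"
begin

abbreviation F :: "bool list set" where
  "F \<equiv> solutions n L0 e0"

lemma length_y0: "length y0 = n"
  using y0_mem by (rule length_if_mem_solutions)

lemma card_flat: "card F = 2 ^ (n - k)"
  using card_solutions[OF L0_vecs L0_indep] length_e0 length_L0 by simp

lemma card_lspan_L0: "card (lspan n L0) = 2 ^ k"
  using card_lspan[OF L0_vecs L0_indep] length_L0 by simp

lemma ip_const_on_flat:
  assumes l: "l \<in> lspan n L0" and y: "y \<in> F"
  shows "ip l y = ip l y0"
proof -
  have y_len: "length y = n"
    using y by (rule length_if_mem_solutions)
  have "\<forall>m\<in>set L0. \<not> ip m (vadd y0 y)"
    using vadd_mem_solutions_iff[OF L0_vecs y0_mem y_len] y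
    by (simp add: mem_homogeneous_solutions_iff)
  then have "\<not> ip l (vadd y0 y)"
    using ip_lspan_False[OF L0_vecs _ _ l] length_y0 y_len by simp
  moreover have "length l = n"
    using l lspan_subset_vecs[OF L0_vecs] by auto
  ultimately show ?thesis
    using ip_vadd_right[of l n y0 y] length_y0 y_len by auto
qed

lemma in_lspan_if_ip_const:
  assumes l: "l \<in> vecs n" and const: "\<forall>y\<in>F. ip l y = ip l y0"
  shows "l \<in> lspan n L0"
proof (rule ccontr)
  assume "l \<notin> lspan n L0"
  then have indep: "lin_indep n (l # L0)" and vecs: "set (l # L0) \<subseteq> vecs n"
    using lin_indep_Cons[of l L0 n] l L0_vecs L0_indep by auto
  txt \<open>Then \<open>F\<close> would lie in a flat of smaller dimension.\<close>
  have "F \<subseteq> solutions n (l # L0) (ip l y0 # e0)"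
    using const by (auto simp: solutions_Cons)
  then have "card F \<le> card (solutions n (l # L0) (ip l y0 # e0))"
    by (intro card_mono) auto
  also have "\<dots> = 2 ^ (n - Suc k)"
    using card_solutions[OF vecs indep] length_e0 length_L0 by simp
  finally have "(2::nat) ^ (n - k) \<le> 2 ^ (n - Suc k)"
    using card_flat by simp
  moreover have "Suc k \<le> n"
    using lin_indep_length_le[OF vecs indep] length_L0 by simp
  ultimately show False
    by simp
qed

lemma solutions_eq_flat_iff:
  assumes L: "set L \<subseteq> vecs n" "lin_indep n L" "length L = k" and e: "length e = k"
  shows "solutions n L e = F \<longleftrightarrow> set L \<subseteq> lspan n L0 \<and> e = map (\<lambda>l. ip l y0) L"
proof
  assume eq: "solutions n L e = F"
  have e_eq: "e = map (\<lambda>l. ip l y0) L"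
  proof (rule nth_equalityI)
    fix i
    assume "i < length e"
    moreover have "y0 \<in> solutions n L e"
      using y0_mem unfolding eq .
    ultimately show "e ! i = map (\<lambda>l. ip l y0) L ! i"
      using e L(3) unfolding solutions_def by auto
  qed (use e L(3) in simp)
  have "l \<in> lspan n L0" if l: "l \<in> set L" for l
  proof -
    obtain i where i: "i < length L" "l = L ! i"
      using l by (auto simp: in_set_conv_nth)
    have "ip l y = ip l y0" if "y \<in> F" for y
    proof -
      have "y \<in> solutions n L e"
        using that unfolding eq .
      then show ?thesis
        using i e_eq by (simp add: solutions_def)
    qed
    moreover have "l \<in> vecs n"
      using l L(1) by blast
    ultimately show ?thesis
      using in_lspan_if_ip_const by blast
  qed
  with e_eq show "set L \<subseteq> lspan n L0 \<and> e = map (\<lambda>l. ip l y0) L"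
    by blast
next
  assume span: "set L \<subseteq> lspan n L0 \<and> e = map (\<lambda>l. ip l y0) L"
  have "F \<subseteq> solutions n L e"
  proof
    fix y
    assume y: "y \<in> F"
    have "ip (L ! i) y = e ! i" if i: "i < length L" for i
    proof -
      have "L ! i \<in> lspan n L0"
        using span nth_mem[OF i] by blast
      then show ?thesis
        using ip_const_on_flat[OF _ y] span i by simp
    qed
    then show "y \<in> solutions n L e"
      using y solutions_subset_vecs unfolding solutions_def by blast
  qed
  moreover have "card (solutions n L e) = card F"
    using card_solutions[OF L(1,2)] e L(3) card_flat by simp
  ultimately show "solutions n L e = F"
    using card_subset_eq[of "solutions n L e" F] by simp
qed

lemma card_lspan_ip_ne:
  assumes x: "x \<in> vecs n"
  shows "card {a \<in> lspan n L0. ip a y0 \<noteq> ip a x} = (if x \<in> F then 0 else 2 ^ (k - 1))"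
proof (cases "x \<in> F")
  case True
  then have "{a \<in> lspan n L0. ip a y0 \<noteq> ip a x} = {}"
    using ip_const_on_flat by auto
  then have "card {a \<in> lspan n L0. ip a y0 \<noteq> ip a x} = 0"
    by (simp only: card.empty)
  with True show ?thesis
    by simp
next
  case False
  have "\<exists>a0\<in>lspan n L0. ip a0 y0 \<noteq> ip a0 x"
  proof (rule ccontr)
    assume "\<not> ?thesis"
    then have const: "ip a y0 = ip a x" if "a \<in> lspan n L0" for a
      using that by blast
    have "ip (L0 ! i) x = e0 ! i" if i: "i < k" for i
    proof -
      have "L0 ! i \<in> lspan n L0"
        using in_lspan[OF nth_mem L0_vecs] i length_L0 by simp
      then have "ip (L0 ! i) x = ip (L0 ! i) y0"
        using const by simp
      then show ?thesis
        using y0_mem i length_L0 by (simp add: solutions_def)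
    qed
    then have "x \<in> F"
      using x length_L0 by (simp add: solutions_def)
    with False show False ..
  qed
  then obtain a0 where a0: "a0 \<in> lspan n L0" "ip a0 y0 \<noteq> ip a0 x"
    by blast
  have span: "lspan n L0 \<subseteq> vecs n"
    using lspan_subset_vecs[OF L0_vecs] .
  have "card (lspan n L0) = 2 * card {a \<in> lspan n L0. ip a y0 \<noteq> ip a x}"
  proof (rule card_involution_swap)
    fix a
    assume a: "a \<in> lspan n L0"
    have lengths: "length a0 = n" "length a = n"
      using a a0(1) span by auto
    show "vadd a0 a \<in> lspan n L0"
      using vadd_in_lspan[OF L0_vecs a0(1) a] .
    show "vadd a0 (vadd a0 a) = a"
      using lengths by (simp add: vadd_vadd_cancel)
    show "(ip (vadd a0 a) y0 \<noteq> ip (vadd a0 a) x) \<longleftrightarrow> \<not> ip a y0 \<noteq> ip a x"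
      using lengths length_y0 x a0(2) by (simp add: ip_vadd_left) blast
  qed (use finite_subset[OF span] in simp)
  then have "2 ^ k = 2 * card {a \<in> lspan n L0. ip a y0 \<noteq> ip a x}"
    using card_lspan_L0 by simp
  then show ?thesis
    using False by (cases k) auto
qed

end

lemma kflat_pointed:
  assumes "F \<in> kflats n k" "k \<le> n"
  shows "\<exists>L0 e0 y0. pointed_flat n k L0 e0 y0 \<and> F = solutions n L0 e0"
proof -
  obtain L0 e0 where L0: "set L0 \<subseteq> vecs n" "lin_indep n L0" "length L0 = k" "length e0 = k"
    and F: "F = solutions n L0 e0"
    using kflat_eq_solutions[OF assms] by blast
  have "card (solutions n L0 e0) \<noteq> 0"
    using card_solutions[OF L0(1,2)] L0(3,4) by simp
  then obtain y0 where "y0 \<in> solutions n L0 e0"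
    by fastforce
  then show ?thesis
    using L0 F by (intro exI conjI) (unfold_locales, auto)
qed

section \<open>Counting linear systems with a prescribed solution flat\<close>

lemma card_indep_extensions:
  assumes W: "W \<subseteq> vecs n" "\<And>xs. set xs \<subseteq> W \<Longrightarrow> lspan n xs \<subseteq> W"
    and s: "set s \<subseteq> W" "lin_indep n s"
  shows "card {gs. length gs = j \<and> set gs \<subseteq> W \<and> lin_indep n (gs @ s)} = (\<Prod>i<j. card W - 2 ^ (length s + i))"
proof (induction j)
  case 0
  have "{gs. length gs = 0 \<and> set gs \<subseteq> W \<and> lin_indep n (gs @ s)} = {[]}"
    using s by auto
  then show ?case
    by simp
next
  case (Suc j)
  let ?G = "\<lambda>j. {gs. length gs = j \<and> set gs \<subseteq> W \<and> lin_indep n (gs @ s)}"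
  let ?ext = "SIGMA gs:?G j. W - lspan n (gs @ s)"
  have finW: "finite W"
    using finite_subset[OF W(1)] by simp
  have finG: "finite (?G j)"
    by (rule finite_subset[of _ "{xs. set xs \<subseteq> W \<and> length xs = j}"])
      (auto intro: finite_lists_length_eq[OF finW])
  txt \<open>An independent extension of length \<open>j + 1\<close> is one of length \<open>j\<close> together with a vector of
    \<open>W\<close> outside its span.\<close>
  have "?G (Suc j) = (\<lambda>(gs, g). g # gs) ` ?ext"
  proof (intro equalityI subsetI)
    fix xs
    assume xs: "xs \<in> ?G (Suc j)"
    then obtain g gs where g: "xs = g # gs" "length gs = j"
      by (cases xs) auto
    have "set (g # gs @ s) \<subseteq> vecs n"
      using xs g s W(1) by auto
    then have "lin_indep n (gs @ s)" "g \<notin> lspan n (gs @ s)"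
      using lin_indep_Cons xs g by auto
    then show "xs \<in> (\<lambda>(gs, g). g # gs) ` ?ext"
      using xs g by force
  next
    fix xs
    assume "xs \<in> (\<lambda>(gs, g). g # gs) ` ?ext"
    then obtain g gs where g: "xs = g # gs" "gs \<in> ?G j" "g \<in> W" "g \<notin> lspan n (gs @ s)"
      by auto
    have "set (g # gs @ s) \<subseteq> vecs n"
      using g s W(1) by auto
    then show "xs \<in> ?G (Suc j)"
      using lin_indep_Cons g by auto
  qed
  moreover have "inj_on (\<lambda>(gs, g). g # gs) ?ext"
    by (rule inj_onI) auto
  moreover have "card (W - lspan n (gs @ s)) = card W - 2 ^ (length s + j)" if "gs \<in> ?G j" for gs
  proof -
    have "set (gs @ s) \<subseteq> W"
      using that s by auto
    then have span: "lspan n (gs @ s) \<subseteq> W" "card (lspan n (gs @ s)) = 2 ^ (length s + j)"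
      using W(2) card_lspan[OF subset_trans[OF _ W(1)]] that by (simp_all add: add.commute)
    then show ?thesis
      using card_Diff_subset[OF finite_subset[OF span(1) finW] span(1)] by simp
  qed
  ultimately have "card (?G (Suc j)) = (\<Sum>gs\<in>?G j. card W - 2 ^ (length s + j))"
    using finG finW by (simp add: card_image card_SigmaI)
  then show ?case
    using Suc.IH by simp
qed

definition completions :: "nat \<Rightarrow> nat \<Rightarrow> bool list \<Rightarrow> bool list list set" where
  "completions n k a = {gs. length gs = k - 1 \<and> set gs \<subseteq> vecs n \<and> lin_indep n (gs @ [a])}"

definition completion_count :: "nat \<Rightarrow> nat \<Rightarrow> nat" where
  "completion_count n k = (\<Prod>i<k - 1. 2 ^ n - 2 ^ Suc i)"

lemma finite_completions: "finite (completions n k a)"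
  by (rule finite_subset[of _ "{xs. set xs \<subseteq> vecs n \<and> length xs = k - 1}"])
    (auto simp: completions_def intro: finite_lists_length_eq)

lemma lin_indep_single: "a \<in> vecs n \<Longrightarrow> a \<noteq> zerov n \<Longrightarrow> lin_indep n [a]"
  using lin_indep_Cons[of a "[]" n] by simp

lemma card_completions:
  assumes "a \<in> vecs n" "a \<noteq> zerov n"
  shows "card (completions n k a) = completion_count n k"
proof -
  have "card (completions n k a) = (\<Prod>i<k - 1. card (vecs n) - 2 ^ (length [a] + i))"
    unfolding completions_def
    by (rule card_indep_extensions) (use assms lin_indep_single lspan_subset_vecs in auto)
  then show ?thesis
    by (simp add: card_vecs completion_count_def)
qed

lemma completion_count_pos:
  assumes "k \<le> n"
  shows "0 < completion_count n k"
proof -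
  have "(2::nat) ^ Suc i < 2 ^ n" if "i < k - 1" for i
    using that assms by (intro power_strict_increasing) auto
  then show ?thesis
    unfolding completion_count_def by (intro prod_pos) auto
qed

definition num_systems :: "nat \<Rightarrow> nat \<Rightarrow> bool list \<Rightarrow> bool \<Rightarrow> bool list set \<Rightarrow> nat" where
  "num_systems n k a c F =
     card {p \<in> completions n k a \<times> {bs. length bs = k - 1}. solutions n (fst p @ [a]) (snd p @ [c]) = F}"

lemma num_systems_not_kflat:
  assumes "F \<notin> kflats n k" "1 \<le> k" "a \<in> vecs n"
  shows "num_systems n k a c F = 0"
proof -
  have "solutions n (gs @ [a]) (bs @ [c]) \<noteq> F" if "gs \<in> completions n k a" "length bs = k - 1" for gs bs
    using solutions_in_kflats[of "gs @ [a]" n k "bs @ [c]"] that assms by (auto simp: completions_def)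
  then show ?thesis
    unfolding num_systems_def by (auto simp: card_eq_0_iff)
qed

context pointed_flat
begin

text \<open>The systems producing \<open>F\<close> are those whose forms lie in the span of \<open>L0\<close>, with right-hand
  sides read off at \<open>y0\<close>; they are counted like the completions of \<open>a\<close> inside this span.\<close>

lemma num_systems_eq:
  assumes "1 \<le> k" and a: "a \<in> vecs n" "a \<noteq> zerov n"
  shows "num_systems n k a c F =
    (if a \<in> lspan n L0 \<and> c = ip a y0 then completion_count k k else 0)"
proof -
  let ?S = "{p \<in> completions n k a \<times> {bs. length bs = k - 1}. solutions n (fst p @ [a]) (snd p @ [c]) = F}"
  let ?f = "\<lambda>l. ip l y0"
  have key: "solutions n (gs @ [a]) (bs @ [c]) = F \<longleftrightarrow>
      a \<in> lspan n L0 \<and> set gs \<subseteq> lspan n L0 \<and> c = ip a y0 \<and> bs = map ?f gs"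
    if "gs \<in> completions n k a" "length bs = k - 1" for gs bs
    using solutions_eq_flat_iff[of "gs @ [a]" "bs @ [c]"] that a assms(1)
    by (auto simp: completions_def)
  show ?thesis
  proof (cases "a \<in> lspan n L0 \<and> c = ip a y0")
    case True
    let ?G = "{gs. length gs = k - 1 \<and> set gs \<subseteq> lspan n L0 \<and> lin_indep n (gs @ [a])}"
    have "?S = (\<lambda>gs. (gs, map ?f gs)) ` ?G"
    proof (intro equalityI subsetI)
      fix p
      assume p: "p \<in> ?S"
      then show "p \<in> (\<lambda>gs. (gs, map ?f gs)) ` ?G"
        using key[of "fst p" "snd p"] by (auto simp: completions_def intro!: image_eqI[of p _ "fst p"])
    next
      fix p
      assume "p \<in> (\<lambda>gs. (gs, map ?f gs)) ` ?G"
      then obtain gs where gs: "gs \<in> ?G" "p = (gs, map ?f gs)"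
        by blast
      then have "gs \<in> completions n k a"
        using lspan_subset_vecs[OF L0_vecs] by (auto simp: completions_def)
      then show "p \<in> ?S"
        using key[of gs "map ?f gs"] True gs by auto
    qed
    moreover have "inj_on (\<lambda>gs. (gs, map ?f gs)) ?G"
      by (rule inj_onI) auto
    ultimately have "card ?S = card ?G"
      by (simp add: card_image)
    also have "\<dots> = (\<Prod>i<k - 1. card (lspan n L0) - 2 ^ (length [a] + i))"
      by (rule card_indep_extensions)
        (use True a lspan_subset_vecs[OF L0_vecs] lspan_subset_lspan[OF L0_vecs] lin_indep_single in auto)
    finally show ?thesis
      using True card_lspan_L0 unfolding num_systems_def completion_count_def by simp
  next
    case False
    then have "?S = {}"
      using key by auto
    with False show ?thesis
      unfolding num_systems_def by (simp only: card.empty if_False)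
  qed
qed

end

section \<open>The distribution of a single random flat\<close>

lemma permutes_all_iff: "\<sigma> permutes {..<k} \<Longrightarrow> (\<forall>i<k. P (\<sigma> i)) \<longleftrightarrow> (\<forall>i<k. P i)"
  using permutes_image[of \<sigma> "{..<k}"] by (metis image_eqI imageE lessThan_iff)

text \<open>The random ordering of the equations does not change the solution set.\<close>

lemma flat_of_eq_solutions:
  assumes "1 \<le> k" and completions: "completions n k a \<noteq> {}"
  shows "flat_of n k a b =
    bind_pmf (pmf_of_set (completions n k a)) (\<lambda>gs.
    bind_pmf (pmf_of_set {bs. length bs = k - 1}) (\<lambda>bs.
      return_pmf (solutions n (gs @ [a]) (bs @ [\<not> b]))))"
proof -
  have perms: "finite {\<sigma>. \<sigma> permutes {..<k}}" "{\<sigma>. \<sigma> permutes {..<k}} \<noteq> {}"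
    using finite_permutations[of "{..<k}"] permutes_id[of "{..<k}"] by blast+
  have "{y \<in> vecs n. \<forall>i<k. ip ((gs @ [a]) ! \<sigma> i) y = (bs @ [\<not> b]) ! \<sigma> i} =
      solutions n (gs @ [a]) (bs @ [\<not> b])"
    if "gs \<in> completions n k a" "\<sigma> permutes {..<k}" for gs bs \<sigma>
  proof -
    have "length (gs @ [a]) = k"
      using that(1) assms(1) by (simp add: completions_def)
    then show ?thesis
      unfolding solutions_def
      using permutes_all_iff[OF that(2), of "\<lambda>i. ip ((gs @ [a]) ! i) _ = (bs @ [\<not> b]) ! i"] by simp
  qed
  then have "bind_pmf (pmf_of_set {\<sigma>. \<sigma> permutes {..<k}}) (\<lambda>\<sigma>.
      return_pmf {y \<in> vecs n. \<forall>i<k. ip ((gs @ [a]) ! \<sigma> i) y = (bs @ [\<not> b]) ! \<sigma> i}) =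
      return_pmf (solutions n (gs @ [a]) (bs @ [\<not> b]))"
    if "gs \<in> completions n k a" for gs bs
    using that perms by (subst bind_pmf_cong[OF refl]) (auto simp: bind_pmf_const)
  moreover have "finite (completions n k a)"
    by (rule finite_completions)
  ultimately show ?thesis
    unfolding flat_of_def Let_def completions_def[symmetric]
    using completions by (intro bind_pmf_cong refl) auto
qed

lemma pmf_bind_pmf_of_set_pair:
  assumes "finite A" "A \<noteq> {}" "finite B" "B \<noteq> {}"
  shows "pmf (bind_pmf (pmf_of_set A) (\<lambda>x. bind_pmf (pmf_of_set B) (\<lambda>y. return_pmf (f x y)))) z =
    real (card {p \<in> A \<times> B. f (fst p) (snd p) = z}) / (real (card A) * real (card B))"
proof -
  have "(\<Sum>y\<in>B. pmf (return_pmf (f x y)) z) = real (card {y \<in> B. f x y = z})" for x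
    using assms(3) by (simp add: indicator_def sum.inter_filter[symmetric] Int_def)
  then have "pmf (bind_pmf (pmf_of_set A) (\<lambda>x. bind_pmf (pmf_of_set B) (\<lambda>y. return_pmf (f x y)))) z =
      real (\<Sum>x\<in>A. card {y \<in> B. f x y = z}) / (real (card A) * real (card B))"
    using assms by (simp add: pmf_bind_pmf_of_set sum_divide_distrib mult.commute)
  also have "(\<Sum>x\<in>A. card {y \<in> B. f x y = z}) = card (SIGMA x:A. {y \<in> B. f x y = z})"
    using assms by (simp add: card_SigmaI)
  also have "(SIGMA x:A. {y \<in> B. f x y = z}) = {p \<in> A \<times> B. f (fst p) (snd p) = z}"
    by auto
  finally show ?thesis .
qed

lemma pmf_flat_of:
  assumes "1 \<le> k" "k \<le> n" "a \<in> vecs n" "a \<noteq> zerov n"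
  shows "pmf (flat_of n k a b) F =
    real (num_systems n k a (\<not> b) F) / (real (completion_count n k) * 2 ^ (k - 1))"
proof -
  have card: "card (completions n k a) = completion_count n k"
    "card {bs :: bool list. length bs = k - 1} = 2 ^ (k - 1)"
    using card_completions[OF assms(3,4)] card_lists_length_eq[of "UNIV :: bool set"] by auto
  then have nonempty: "completions n k a \<noteq> {}" "{bs :: bool list. length bs = k - 1} \<noteq> {}"
    using completion_count_pos[OF assms(2)] by (auto intro: exI[of _ "replicate (k - 1) False"])
  have "finite {bs :: bool list. length bs = k - 1}"
    using finite_lists_length_eq[of "UNIV :: bool set"] by simp
  then show ?thesis
    unfolding flat_of_eq_solutions[OF assms(1) nonempty(1)] num_systems_def
    using nonempty card by (simp add: pmf_bind_pmf_of_set_pair finite_completions)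
qed

lemma eq_pmf_of_setI:
  assumes "finite S" and pmf_p: "\<And>x. pmf p x = (if x \<in> S then c else 0)"
  shows "p = pmf_of_set S"
proof -
  have support: "set_pmf p \<subseteq> S"
    using pmf_p by (auto simp: set_pmf_iff split: if_splits)
  then have "S \<noteq> {}"
    using set_pmf_not_empty[of p] by blast
  moreover have "real (card S) * c = 1"
    using sum_pmf_eq_1[OF assms(1) support] pmf_p by simp
  ultimately have "c = 1 / real (card S)"
    using assms(1) by (simp add: field_simps)
  then show ?thesis
    using pmf_p \<open>S \<noteq> {}\<close> assms(1) by (intro pmf_eqI) (simp add: indicator_def)
qed

lemma finite_nonzero_vecs: "finite (nonzero_vecs n)"
  by (simp add: nonzero_vecs_def)

lemma card_nonzero_vecs: "card (nonzero_vecs n) = 2 ^ n - 1"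
  by (simp add: nonzero_vecs_def card_Diff_singleton card_vecs)

lemma nonzero_vecs_ne: "1 \<le> n \<Longrightarrow> nonzero_vecs n \<noteq> {}"
  using card_nonzero_vecs[of n] one_less_power[of "2::nat" n] by auto

definition num_choices :: "nat \<Rightarrow> nat \<Rightarrow> real" where
  "num_choices n k = real (2 ^ n - 1) * real (completion_count n k) * 2 ^ (k - 1)"

lemma pmf_flat_of_random_form:
  assumes "1 \<le> k" "k \<le> n"
  shows "pmf (bind_pmf (pmf_of_set (nonzero_vecs n)) (\<lambda>a. flat_of n k a (h a))) F =
    (\<Sum>a\<in>nonzero_vecs n. real (num_systems n k a (\<not> h a) F)) / num_choices n k"
proof -
  have "pmf (flat_of n k a (h a)) F =
      real (num_systems n k a (\<not> h a) F) / (real (completion_count n k) * 2 ^ (k - 1))"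
    if "a \<in> nonzero_vecs n" for a
    using pmf_flat_of[OF assms] that by (simp add: nonzero_vecs_def)
  then show ?thesis
    using assms finite_nonzero_vecs nonzero_vecs_ne[of n]
    by (simp add: pmf_bind_pmf_of_set card_nonzero_vecs num_choices_def sum_divide_distrib mult_ac)
qed

context pointed_flat
begin

lemma sum_num_systems_both:
  assumes "1 \<le> k"
  shows "(\<Sum>a\<in>nonzero_vecs n. real (num_systems n k a True F) + real (num_systems n k a False F)) =
    real (completion_count k k) * (2 ^ k - 1)"
proof -
  have "(\<Sum>a\<in>nonzero_vecs n. real (num_systems n k a True F) + real (num_systems n k a False F)) =
      (\<Sum>a\<in>nonzero_vecs n. if a \<in> lspan n L0 then real (completion_count k k) else 0)"
    using num_systems_eq[OF assms] by (intro sum.cong) (auto simp: nonzero_vecs_def)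
  also have "\<dots> = (\<Sum>a\<in>{a \<in> nonzero_vecs n. a \<in> lspan n L0}. real (completion_count k k))"
    by (rule sum.inter_filter[OF finite_nonzero_vecs, symmetric])
  also have "{a \<in> nonzero_vecs n. a \<in> lspan n L0} = lspan n L0 - {zerov n}"
    using lspan_subset_vecs[OF L0_vecs] by (auto simp: nonzero_vecs_def)
  also have "(\<Sum>a\<in>lspan n L0 - {zerov n}. real (completion_count k k)) =
      real (completion_count k k) * real (2 ^ k - 1 :: nat)"
    using card_lspan_L0 zerov_in_lspan[of n L0] by (simp add: card_Diff_singleton)
  finally show ?thesis
    by (simp add: of_nat_diff)
qed

lemma sum_num_systems_point:
  assumes "1 \<le> k" "x \<in> vecs n"
  shows "(\<Sum>a\<in>nonzero_vecs n. real (num_systems n k a (\<not> ip a x) F)) =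
    real (completion_count k k) * (if x \<in> F then 0 else 2 ^ (k - 1))"
proof -
  have "(\<Sum>a\<in>nonzero_vecs n. real (num_systems n k a (\<not> ip a x) F)) =
      (\<Sum>a\<in>nonzero_vecs n. if a \<in> lspan n L0 \<and> ip a y0 \<noteq> ip a x then real (completion_count k k) else 0)"
    using num_systems_eq[OF assms(1)] by (intro sum.cong) (auto simp: nonzero_vecs_def)
  also have "\<dots> = (\<Sum>a\<in>{a \<in> nonzero_vecs n. a \<in> lspan n L0 \<and> ip a y0 \<noteq> ip a x}. real (completion_count k k))"
    by (rule sum.inter_filter[OF finite_nonzero_vecs, symmetric])
  also have "{a \<in> nonzero_vecs n. a \<in> lspan n L0 \<and> ip a y0 \<noteq> ip a x} = {a \<in> lspan n L0. ip a y0 \<noteq> ip a x}"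
    using lspan_subset_vecs[OF L0_vecs] by (auto simp: nonzero_vecs_def)
  also have "(\<Sum>a\<in>{a \<in> lspan n L0. ip a y0 \<noteq> ip a x}. real (completion_count k k)) =
      real (completion_count k k) * card {a \<in> lspan n L0. ip a y0 \<noteq> ip a x}"
    by simp
  finally show ?thesis
    using card_lspan_ip_ne[OF assms(2)] by simp
qed

end

lemma flat_of_uniform_input:
  assumes "1 \<le> k" "k \<le> n"
  shows "bind_pmf (pmf_of_set (nonzero_vecs n)) (\<lambda>a. bind_pmf (pmf_of_set UNIV) (flat_of n k a)) = q0 n k"
  unfolding q0_def
proof (rule eq_pmf_of_setI[OF finite_kflats[OF assms(2)]])
  fix F
  have "pmf (bind_pmf (pmf_of_set UNIV) (\<lambda>b. bind_pmf (pmf_of_set (nonzero_vecs n)) (\<lambda>a. flat_of n k a b))) F =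
      (\<Sum>a\<in>nonzero_vecs n. real (num_systems n k a True F) + real (num_systems n k a False F)) / (2 * num_choices n k)"
    using pmf_flat_of_random_form[OF assms, of "\<lambda>_. _"]
    by (simp add: pmf_bind_pmf_of_set UNIV_bool add_divide_distrib sum.distrib)
  moreover have "(\<Sum>a\<in>nonzero_vecs n. real (num_systems n k a True F) + real (num_systems n k a False F)) =
      (if F \<in> kflats n k then real (completion_count k k) * (2 ^ k - 1) else 0)"
  proof (cases "F \<in> kflats n k")
    case True
    then obtain L0 e0 y0 where "pointed_flat n k L0 e0 y0" "F = solutions n L0 e0"
      using kflat_pointed[OF _ assms(2)] by blast
    with True show ?thesis
      using pointed_flat.sum_num_systems_both[OF _ assms(1)] by simp
  qed (simp add: num_systems_not_kflat[OF _ assms(1)] nonzero_vecs_def)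
  ultimately show "pmf (bind_pmf (pmf_of_set (nonzero_vecs n)) (\<lambda>a. bind_pmf (pmf_of_set UNIV) (flat_of n k a))) F =
      (if F \<in> kflats n k then real (completion_count k k) * (2 ^ k - 1) / (2 * num_choices n k) else 0)"
    by (subst bind_commute_pmf) simp
qed

lemma flat_of_noiseless:
  assumes "1 \<le> k" "k \<le> n" "x \<in> vecs n"
  shows "bind_pmf (pmf_of_set (nonzero_vecs n)) (\<lambda>a. flat_of n k a (ip a x)) = qx n k x"
  unfolding qx_def
proof (rule eq_pmf_of_setI)
  show "finite {S \<in> kflats n k. x \<notin> S}"
    using finite_kflats[OF assms(2)] by simp
  fix F
  have "(\<Sum>a\<in>nonzero_vecs n. real (num_systems n k a (\<not> ip a x) F)) =
      (if F \<in> {S \<in> kflats n k. x \<notin> S} then real (completion_count k k) * 2 ^ (k - 1) else 0)"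
  proof (cases "F \<in> kflats n k")
    case True
    then obtain L0 e0 y0 where "pointed_flat n k L0 e0 y0" "F = solutions n L0 e0"
      using kflat_pointed[OF _ assms(2)] by blast
    with True show ?thesis
      using pointed_flat.sum_num_systems_point[OF _ assms(1,3)] by simp
  qed (simp add: num_systems_not_kflat[OF _ assms(1)] nonzero_vecs_def)
  then show "pmf (bind_pmf (pmf_of_set (nonzero_vecs n)) (\<lambda>a. flat_of n k a (ip a x))) F =
      (if F \<in> {S \<in> kflats n k. x \<notin> S} then real (completion_count k k) * 2 ^ (k - 1) / num_choices n k else 0)"
    using pmf_flat_of_random_form[OF assms(1,2)] by simp
qed

lemma bernoulli_pmf_eq_mixture:
  assumes "0 \<le> \<eta>" "\<eta> \<le> 1 / 2"
  shows "bernoulli_pmf \<eta> =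
    bind_pmf (bernoulli_pmf (1 - 2 * \<eta>)) (\<lambda>c. if c then return_pmf False else bernoulli_pmf (1 / 2))"
proof (rule pmf_eqI)
  fix b
  show "pmf (bernoulli_pmf \<eta>) b =
      pmf (bind_pmf (bernoulli_pmf (1 - 2 * \<eta>)) (\<lambda>c. if c then return_pmf False else bernoulli_pmf (1 / 2))) b"
    using assms by (cases b) (simp_all add: pmf_bind)
qed

lemma bind_bernoulli_half_flip:
  "bind_pmf (bernoulli_pmf (1 / 2)) (\<lambda>e. f (c \<noteq> e)) = bind_pmf (pmf_of_set UNIV) f"
proof -
  have "bij_betw (\<lambda>e. c \<noteq> e) UNIV UNIV"
    by (rule bij_betwI[of _ _ _ "\<lambda>e. c \<noteq> e"]) auto
  then have "map_pmf (\<lambda>e. c \<noteq> e) (pmf_of_set UNIV) = pmf_of_set UNIV"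
    by (rule map_pmf_of_set_bij_betw) auto
  then show ?thesis
    unfolding bernoulli_pmf_half_conv_pmf_of_set by (metis bind_map_pmf)
qed

lemma flat_of_noisy:
  assumes "1 \<le> k" "k \<le> n" "x \<in> vecs n" "0 \<le> \<eta>" "\<eta> \<le> 1 / 2"
  shows "bind_pmf (pmf_of_set (nonzero_vecs n)) (\<lambda>a. bind_pmf (bernoulli_pmf \<eta>) (\<lambda>e. flat_of n k a (ip a x \<noteq> e)))
    = qxpi n k x (1 - 2 * \<eta>)"
proof -
  let ?noiseless = "\<lambda>a. flat_of n k a (ip a x)"
  let ?uniform = "\<lambda>a. bind_pmf (pmf_of_set UNIV) (flat_of n k a)"
  have "bind_pmf (bernoulli_pmf \<eta>) (\<lambda>e. flat_of n k a (ip a x \<noteq> e)) =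
      bind_pmf (bernoulli_pmf (1 - 2 * \<eta>)) (\<lambda>c. if c then ?noiseless a else ?uniform a)" for a
    unfolding bernoulli_pmf_eq_mixture[OF assms(4,5)] bind_assoc_pmf
    using bind_bernoulli_half_flip[of "flat_of n k a" "ip a x"]
    by (intro bind_pmf_cong) (auto simp: bind_return_pmf)
  then have "bind_pmf (pmf_of_set (nonzero_vecs n)) (\<lambda>a. bind_pmf (bernoulli_pmf \<eta>) (\<lambda>e. flat_of n k a (ip a x \<noteq> e))) =
      bind_pmf (bernoulli_pmf (1 - 2 * \<eta>)) (\<lambda>c. bind_pmf (pmf_of_set (nonzero_vecs n))
        (\<lambda>a. if c then ?noiseless a else ?uniform a))"
    by (simp add: bind_commute_pmf[of "pmf_of_set (nonzero_vecs n)"])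
  also have "\<dots> = bind_pmf (bernoulli_pmf (1 - 2 * \<eta>)) (\<lambda>c. if c then qx n k x else q0 n k)"
    using flat_of_noiseless[OF assms(1-3)] flat_of_uniform_input[OF assms(1,2)]
    by (intro bind_pmf_cong) auto
  finally show ?thesis
    unfolding qxpi_def .
qed

lemma iid_pmf_Suc: "iid_pmf (Suc m) p = bind_pmf p (\<lambda>x. bind_pmf (iid_pmf m p) (\<lambda>xs. return_pmf (x # xs)))"
  by (simp add: iid_pmf_def)

lemma iid_pmf_map2:
  "bind_pmf (iid_pmf m p) (\<lambda>as. bind_pmf (iid_pmf m q) (\<lambda>bs. seq_pmf (map2 f as bs))) =
   iid_pmf m (bind_pmf p (\<lambda>a. bind_pmf q (\<lambda>b. f a b)))"
proof (induction m)
  case 0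
  then show ?case by (simp add: iid_pmf_def bind_return_pmf)
next
  case (Suc m)
  have "bind_pmf (iid_pmf (Suc m) p) (\<lambda>as. bind_pmf (iid_pmf (Suc m) q) (\<lambda>bs. seq_pmf (map2 f as bs))) =
    bind_pmf p (\<lambda>a. bind_pmf (iid_pmf m p) (\<lambda>as. bind_pmf q (\<lambda>b. bind_pmf (iid_pmf m q) (\<lambda>bs.
      bind_pmf (f a b) (\<lambda>v. bind_pmf (seq_pmf (map2 f as bs)) (\<lambda>vs. return_pmf (v # vs)))))))"
    by (simp add: iid_pmf_Suc bind_assoc_pmf bind_return_pmf)
  also have "\<dots> = bind_pmf p (\<lambda>a. bind_pmf q (\<lambda>b. bind_pmf (f a b) (\<lambda>v. bind_pmf (iid_pmf m p) (\<lambda>as.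
      bind_pmf (iid_pmf m q) (\<lambda>bs. bind_pmf (seq_pmf (map2 f as bs)) (\<lambda>vs. return_pmf (v # vs)))))))"
    by (simp only: bind_commute_pmf[of "iid_pmf m p"]) (simp only: bind_commute_pmf[of "iid_pmf m q"])
  also have "\<dots> = iid_pmf (Suc m) (bind_pmf p (\<lambda>a. bind_pmf q (\<lambda>b. f a b)))"
    unfolding iid_pmf_Suc Suc.IH[symmetric] by (simp add: bind_assoc_pmf bind_return_pmf)
  finally show ?case .
qed

lemma map2_map2: "map2 g as (map2 h as es) = map2 (\<lambda>a e. g a (h a e)) as es"
proof (induction as arbitrary: es)
  case (Cons a as)
  then show ?case by (cases es) auto
qed simp

theorem mainTheorem11:
  fixes n k m :: nat
  assumes "1 \<le> k" and "k \<le> n" and "1 \<le> m"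
  shows "V_unif n k m = P_unif n k m \<and>
         (\<forall>x \<eta>. x \<in> vecs n \<and> 0 \<le> \<eta> \<and> \<eta> < 1/2 \<longrightarrow> V_lpn n k m x \<eta> = P_xpi n k m x (1 - 2 * \<eta>))"
proof (intro conjI allI impI)
  show "V_unif n k m = P_unif n k m"
    unfolding V_unif_def P_unif_def iid_pmf_map2 flat_of_uniform_input[OF assms(1,2)] ..
  fix x and \<eta> :: real
  assume "x \<in> vecs n \<and> 0 \<le> \<eta> \<and> \<eta> < 1/2"
  then show "V_lpn n k m x \<eta> = P_xpi n k m x (1 - 2 * \<eta>)"
    unfolding V_lpn_def P_xpi_def map2_map2 iid_pmf_map2
    using flat_of_noisy[OF assms(1,2), of x \<eta>] by simp
qed

end
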